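(* Let $\mathcal{DP}^*_1$ be the digraph with vertex set $\{1,2\}$ and edge set $\{(1,1),(1,2),(2,2)\}$. Then $\Pi_2\text{-}\mathrm{CSP}((\mathcal{DP}^*_1)^\omega) \subseteq \Pi_2\text{-}\mathrm{CSP}(\mathbb{N};\leq)$, where the edge relation and $\leq$ interpret the same binary relation symbol.
   Context: $(\mathcal{DP}^*_1)^\omega$ is the direct power of countably many copies of $\mathcal{DP}^*_1$ (edges holding coordinatewise). $\Pi_2\text{-}\mathrm{CSP}(\mathcal{A})$ is the set of sentences of the form $\forall\bar x\exists\bar y\,P$, with $P$ a conjunction of atoms (relational atoms and equalities), true in $\mathcal{A}$. *)

theory Defs
  imports Main
begin

datatype 'v atom = Rel 'v 'v | Eq 'v 'v

fun sat_atom :: "('a \<Rightarrow> 'a \<Rightarrow> bool) \<Rightarrow> ('v \<Rightarrow> 'a) \<Rightarrow> 'v atom \<Rightarrow> bool" where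
  "sat_atom R s (Rel x y) = R (s x) (s y)"
| "sat_atom R s (Eq x y) = (s x = s y)"

text \<open>Variables are  Inl i  (universally quantified) and  Inr j  (existentially quantified);
  the sentence is the list of conjuncts.\<close>
type_synonym pi2_sentence = "(nat + nat) atom list"

definition pi2_holds :: "'a set \<Rightarrow> ('a \<Rightarrow> 'a \<Rightarrow> bool) \<Rightarrow> pi2_sentence \<Rightarrow> bool" where
  "pi2_holds D R \<phi> \<longleftrightarrow>
     (\<forall>u. (\<forall>i. u i \<in> D) \<longrightarrow>
        (\<exists>e. (\<forall>j. e j \<in> D) \<and> (\<forall>a\<in>set \<phi>. sat_atom R (case_sum u e) a)))"

definition Pi2_CSP :: "'a set \<Rightarrow> ('a \<Rightarrow> 'a \<Rightarrow> bool) \<Rightarrow> pi2_sentence set" where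
  "Pi2_CSP D R = {\<phi>. pi2_holds D R \<phi>}"

definition DP1_dom :: "nat set" where "DP1_dom = {1, 2}"
definition DP1_edge :: "nat \<Rightarrow> nat \<Rightarrow> bool" where
  "DP1_edge a b \<longleftrightarrow> (a, b) \<in> {(1,1), (1,2), (2,2)}"

definition DP1w_dom :: "(nat \<Rightarrow> nat) set" where
  "DP1w_dom = {f. \<forall>i. f i \<in> DP1_dom}"
definition DP1w_edge :: "(nat \<Rightarrow> nat) \<Rightarrow> (nat \<Rightarrow> nat) \<Rightarrow> bool" where
  "DP1w_edge f g \<longleftrightarrow> (\<forall>i. DP1_edge (f i) (g i))"

end

theory Submission
  imports Defs
begin

text \<open>A \<open>\<Pi>\<^sub>2\<close> sentence true in \<open>(D, R)\<close> transfers to \<open>(D', R')\<close> as soon as every finite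
  set of universal values can be lifted into \<open>D\<close> by some \<open>g\<close> and recovered by a homomorphism
  \<open>h\<close> back into \<open>D'\<close>: evaluate the sentence at \<open>g \<circ> u\<close> and push the witnesses through \<open>h\<close>.
  For the countable power of \<open>DP\<^sup>*\<^sub>1\<close> the number \<open>a\<close> is lifted to the vector with \<open>a\<close> leading 2's and 1's elsewhere,
  and \<open>h\<close> counts the 2's among the first \<open>N\<close> coordinates, which is monotone along edges
  because an edge never leaves the value 2.\<close>

lemma sat_atom_hom:
  assumes "\<forall>v\<in>set_atom a. s v \<in> D"
    and "\<forall>b\<in>D. \<forall>c\<in>D. R b c \<longrightarrow> R' (h b) (h c)"
    and "sat_atom R s a"
  shows "sat_atom R' (h \<circ> s) a"
  using assms by (cases a) auto

lemma sat_atom_cong: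
  assumes "\<And>v. v \<in> set_atom a \<Longrightarrow> s v = t v"
  shows "sat_atom R s a = sat_atom R t a"
  using assms by (cases a) auto

lemma pi2_holds_transfer:
  fixes D :: "'a set" and D' :: "'b set"
  assumes holds: "pi2_holds D R \<phi>"
    and retract: "\<And>F. finite F \<Longrightarrow> F \<subseteq> D' \<Longrightarrow>
      \<exists>g h. g ` F \<subseteq> D \<and> h ` D \<subseteq> D' \<and>
            (\<forall>b\<in>D. \<forall>c\<in>D. R b c \<longrightarrow> R' (h b) (h c)) \<and> (\<forall>a\<in>F. h (g a) = a)"
  shows "pi2_holds D' R' \<phi>"
  unfolding pi2_holds_def
proof (intro allI impI)
  fix u :: "nat \<Rightarrow> 'b" assume u: "\<forall>i. u i \<in> D'"
  define I where "I = insert 0 {i. \<exists>a\<in>set \<phi>. Inl i \<in> set_atom a}"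
  have "finite I"
  proof -
    have "finite (\<Union>a\<in>set \<phi>. set_atom a)"
      by (intro finite_UN_I) (auto intro: atom.set_finite)
    then have "finite (Inl -` (\<Union>a\<in>set \<phi>. set_atom a))"
      by (rule finite_vimageI) simp
    then have "finite {i. \<exists>a\<in>set \<phi>. Inl i \<in> set_atom a}"
      by (rule rev_finite_subset) auto
    then show ?thesis by (simp add: I_def)
  qed
  then have "finite (u ` I)" by simp
  moreover have "u ` I \<subseteq> D'" using u by auto
  ultimately have "\<exists>g h. g ` u ` I \<subseteq> D \<and> h ` D \<subseteq> D' \<and>
      (\<forall>b\<in>D. \<forall>c\<in>D. R b c \<longrightarrow> R' (h b) (h c)) \<and> (\<forall>a\<in>u ` I. h (g a) = a)"
    by (rule retract)
  then obtain g h where g: "g ` u ` I \<subseteq> D" and h: "h ` D \<subseteq> D'"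
    and hom: "\<forall>b\<in>D. \<forall>c\<in>D. R b c \<longrightarrow> R' (h b) (h c)" and inverse: "\<forall>a\<in>u ` I. h (g a) = a"
    by (elim exE conjE)
  define u' where "u' i = g (u (if i \<in> I then i else 0))" for i
  have "\<forall>i. u' i \<in> D"
    using g by (auto simp: u'_def I_def)
  then obtain e where e: "\<forall>j. e j \<in> D" and sat: "\<forall>a\<in>set \<phi>. sat_atom R (case_sum u' e) a"
    using holds unfolding pi2_holds_def by blast
  show "\<exists>e'. (\<forall>j. e' j \<in> D') \<and> (\<forall>a\<in>set \<phi>. sat_atom R' (case_sum u e') a)"
  proof (intro exI[of _ "h \<circ> e"] conjI allI ballI)
    show "(h \<circ> e) j \<in> D'" for j using e h by auto
    fix a assume a: "a \<in> set \<phi>"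
    have "\<forall>v\<in>set_atom a. case_sum u' e v \<in> D"
      using e \<open>\<forall>i. u' i \<in> D\<close> by (simp split: sum.split)
    moreover note hom
    moreover have "sat_atom R (case_sum u' e) a" using sat a by blast
    ultimately have "sat_atom R' (h \<circ> case_sum u' e) a"
      by (rule sat_atom_hom)
    moreover have "(h \<circ> case_sum u' e) v = case_sum u (h \<circ> e) v" if "v \<in> set_atom a" for v
    proof (cases v)
      case (Inl i)
      with that a have "i \<in> I" by (auto simp: I_def)
      with Inl inverse show ?thesis by (simp add: u'_def)
    qed simp
    ultimately show "sat_atom R' (case_sum u (h \<circ> e)) a"
      using sat_atom_cong[of a "h \<circ> case_sum u' e" "case_sum u (h \<circ> e)" R'] by blast
  qed
qed

definition threshold_vector :: "nat \<Rightarrow> nat \<Rightarrow> nat" where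
  "threshold_vector a = (\<lambda>i. if i < a then 2 else 1)"

definition count_twos :: "nat \<Rightarrow> (nat \<Rightarrow> nat) \<Rightarrow> nat" where
  "count_twos N f = card {i. i < N \<and> f i = 2}"

lemma threshold_vector_in_DP1w_dom: "threshold_vector a \<in> DP1w_dom"
  by (simp add: threshold_vector_def DP1w_dom_def DP1_dom_def)

lemma count_twos_threshold_vector:
  assumes "a \<le> N"
  shows "count_twos N (threshold_vector a) = a"
proof -
  have "{i. i < N \<and> threshold_vector a i = 2} = {..<a}"
    using assms by (auto simp: threshold_vector_def)
  then show ?thesis by (simp add: count_twos_def)
qed

lemma count_twos_mono:
  assumes "DP1w_edge f g"
  shows "count_twos N f \<le> count_twos N g"
proof -
  have "f i = 2 \<Longrightarrow> g i = 2" for i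
    using assms[unfolded DP1w_edge_def, rule_format, of i] by (auto simp: DP1_edge_def)
  then show ?thesis
    unfolding count_twos_def by (intro card_mono) auto
qed

lemma DP1w_retracts_onto_nat:
  fixes F :: "nat set"
  assumes "finite F"
  shows "\<exists>g h. g ` F \<subseteq> DP1w_dom \<and> h ` DP1w_dom \<subseteq> UNIV \<and>
    (\<forall>b\<in>DP1w_dom. \<forall>c\<in>DP1w_dom. DP1w_edge b c \<longrightarrow> h b \<le> h c) \<and> (\<forall>a\<in>F. h (g a) = a)"
proof (intro exI[of _ threshold_vector] exI[of _ "count_twos (Max (insert 0 F))"] conjI)
  show "\<forall>a\<in>F. count_twos (Max (insert 0 F)) (threshold_vector a) = a"
    using assms by (simp add: count_twos_threshold_vector)
qed (auto simp: threshold_vector_in_DP1w_dom count_twos_mono)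

theorem mainTheorem8:
  shows "Pi2_CSP DP1w_dom DP1w_edge \<subseteq> Pi2_CSP (UNIV :: nat set) (\<le>)"
proof
  fix \<phi> assume "\<phi> \<in> Pi2_CSP DP1w_dom DP1w_edge"
  then have "pi2_holds DP1w_dom DP1w_edge \<phi>" by (simp add: Pi2_CSP_def)
  then have "pi2_holds (UNIV :: nat set) (\<le>) \<phi>"
    by (rule pi2_holds_transfer) (rule DP1w_retracts_onto_nat)
  then show "\<phi> \<in> Pi2_CSP (UNIV :: nat set) (\<le>)" by (simp add: Pi2_CSP_def)
qed

end
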